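(* Consider a sequence of problems indexed by $n$ with a fixed integer $m\ge1$, a support set $\mathcal{S}\subseteq\{1,\dots,n\}$ of size $s=s(n)$, and a mean $\theta_1=\theta_1(n)>0$. For each $i\in\{1,\dots,n\}$ one observes $2m$ observations $y_{i,1},\dots,y_{i,2m}$, all mutually independent, with $y_{i,j}\sim\mathcal{N}(0,1)$ if $i\notin\mathcal{S}$ and $y_{i,j}\sim\mathcal{N}(\theta_1,1)$ if $i\in\mathcal{S}$. Let $T_{i,2m}=\frac{1}{2m}\sum_{j=1}^{2m}y_{i,j}$ and, for a threshold $\tau$, let $\mathcal{S}_\tau=\{i:T_{i,2m}>\tau\}$ and $\mathcal{E}_\tau=\{\mathcal{S}_\tau\neq\mathcal{S}\}$. If $\theta_1<\sqrt{\frac{\log(n-s)}{m}}$, then the non-sequential procedure is unreliable; specifically, $\min_\tau\mathbb{P}(\mathcal{E}_\tau)\ge 1/2$ in the limit $n\to\infty$.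
   Context: A support estimator $\widehat{\mathcal{S}}(n)$ is unreliable if $\lim_{n\to\infty}\mathbb{P}(\widehat{\mathcal{S}}(n)\neq\mathcal{S}(n))>0$. The inequality on $\theta_1$ is understood as a condition on the growth of $\theta_1(n)$ with $n$. *)

theory Defs
  imports "HOL-Probability.Probability"
begin

definition obs_model :: "nat \<Rightarrow> nat set \<Rightarrow> real \<Rightarrow> nat \<Rightarrow> (nat \<times> nat \<Rightarrow> real) measure" where
  "obs_model m S \<theta> n =
     (\<Pi>\<^sub>M ij \<in> {1..n} \<times> {1..2*m}.
        density lborel (normal_density (if fst ij \<in> S then \<theta> else 0) 1))"

definition avg_stat :: "nat \<Rightarrow> (nat \<times> nat \<Rightarrow> real) \<Rightarrow> nat \<Rightarrow> real" where
  "avg_stat m y i = (1 / (2 * real m)) * (\<Sum>j = 1..2*m. y (i, j))"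

definition thresh_support :: "nat \<Rightarrow> nat \<Rightarrow> real \<Rightarrow> (nat \<times> nat \<Rightarrow> real) \<Rightarrow> nat set" where
  "thresh_support m n \<tau> y = {i \<in> {1..n}. avg_stat m y i > \<tau>}"

definition err_prob :: "nat \<Rightarrow> nat set \<Rightarrow> real \<Rightarrow> nat \<Rightarrow> real \<Rightarrow> real" where
  "err_prob m S \<theta> n \<tau> =
     measure (obs_model m S \<theta> n)
       {y \<in> space (obs_model m S \<theta> n). thresh_support m n \<tau> y \<noteq> S}"

end

theory Submission
  imports Defs "HOL-Real_Asymp.Real_Asymp"
begin

text \<open>
  Write \<open>\<Phi>\<close> for the standard normal distribution function, \<open>r = \<surd>(2m)\<close>, \<open>x = \<tau> r\<close>,
  \<open>a = \<theta> r\<close>, \<open>N = n - s\<close>. The statistics \<open>T\<^sub>i r\<close> are independent, standard normal for the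
  \<open>N\<close> nulls and normal with mean \<open>a\<close> for the \<open>s\<close> signals. A threshold errs if it drops a
  given signal, if it keeps some null, or if it drops some signal, so its error probability is
  at least each of \<open>\<Phi>(x - a)\<close>, \<open>1 - \<Phi>(x)\<^sup>N\<close> and \<open>1 - (1 - \<Phi>(x - a))\<^sup>s\<close>; the hypothesis
  says \<open>a < \<surd>(2 ln N)\<close>. Fix \<open>c > 0\<close>. If \<open>x < 0\<close> the second bound is at least \<open>1/2\<close>,
  and if \<open>x \<ge> a - c\<close> the first is at least \<open>1/2 - c\<close>. Otherwise \<open>0 \<le> x < \<surd>(2 ln N) - c\<close>.
  As \<open>N (1 - \<Phi>(\<surd>(2 ln N) - c)) \<rightarrow> \<infinity>\<close>, for large \<open>N\<close> the second bound exceeds \<open>1/2\<close>;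
  for bounded \<open>N\<close>, \<open>x - a\<close> is bounded below while \<open>s \<rightarrow> \<infinity>\<close>, and the third bound does.
\<close>

section \<open>The standard normal distribution\<close>

abbreviation std_normal_cdf :: "real \<Rightarrow> real" where
  "std_normal_cdf \<equiv> cdf std_normal_distribution"

interpretation std_normal: real_distribution std_normal_distribution
  by (rule real_dist_normal_dist)

lemma std_normal_density_le_1: "std_normal_density x \<le> 1"
proof -
  have "1 / sqrt (2 * pi) \<le> 1"
    using pi_gt3 by (simp add: divide_le_eq)
  then show ?thesis
    unfolding std_normal_density_def by (intro mult_le_one) auto
qed

lemma std_normal_density_antimono:
  "\<bar>x\<bar> \<le> \<bar>y\<bar> \<Longrightarrow> std_normal_density y \<le> std_normal_density x"
  unfolding std_normal_density_def by (intro mult_left_mono) (auto simp: abs_le_square_iff)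

lemma nn_integral_std_normal_density_Ioc:
  "a \<le> b \<Longrightarrow>
     (\<integral>\<^sup>+x\<in>{a<..b}. std_normal_density x \<partial>lborel) = ennreal (std_normal_cdf b - std_normal_cdf a)"
  using std_normal.emeasure_Ioc[of a b] by (simp add: emeasure_density)

lemma std_normal_cdf_diff_le:
  assumes "a \<le> b"
  shows "std_normal_cdf b - std_normal_cdf a \<le> b - a"
proof -
  have "ennreal (std_normal_cdf b - std_normal_cdf a) \<le> (\<integral>\<^sup>+x. ennreal 1 * indicator {a<..b} x \<partial>lborel)"
    unfolding nn_integral_std_normal_density_Ioc[OF assms, symmetric]
    by (intro nn_integral_mono) (auto simp: indicator_def std_normal_density_le_1)
  with assms show ?thesis
    by simp
qed

lemma std_normal_cdf_diff_ge:
  assumes "a \<le> b"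
  shows "std_normal_density (max \<bar>a\<bar> \<bar>b\<bar>) * (b - a) \<le> std_normal_cdf b - std_normal_cdf a"
proof -
  have "\<bar>z\<bar> \<le> max \<bar>a\<bar> \<bar>b\<bar>" if "a < z" "z \<le> b" for z
    using that by linarith
  then have "(\<integral>\<^sup>+x. ennreal (std_normal_density (max \<bar>a\<bar> \<bar>b\<bar>)) * indicator {a<..b} x \<partial>lborel)
      \<le> ennreal (std_normal_cdf b - std_normal_cdf a)"
    unfolding nn_integral_std_normal_density_Ioc[OF assms, symmetric]
    by (intro nn_integral_mono) (auto simp: indicator_def std_normal_density_antimono)
  with assms show ?thesis
    by (simp add: nn_integral_cmult_indicator ennreal_mult[symmetric] std_normal.cdf_nondecreasing)
qed

lemma std_normal_distributed_uminus:
  "distributed std_normal_distribution lborel uminus std_normal_density"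
proof -
  have "distributed std_normal_distribution lborel (\<lambda>x. x) std_normal_density"
    by (simp add: distributed_def distr_id2)
  then have "distributed std_normal_distribution lborel (\<lambda>x. 0 + (-1) * x)
      (normal_density (0 + (-1) * 0) (\<bar>-1\<bar> * 1))"
    by (rule std_normal.normal_density_affine) simp_all
  then show ?thesis
    by simp
qed

lemma std_normal_cdf_uminus: "std_normal_cdf (- x) = 1 - std_normal_cdf x"
proof -
  have "std_normal_cdf (- x) = measure std_normal_distribution (uminus -` {x..})"
    by (simp add: cdf_def2 vimage_def le_minus_iff atMost_def)
  also have "\<dots> = measure std_normal_distribution {x..}"
    using distributed_distr_eq_density[OF std_normal_distributed_uminus]
      measure_distr[of uminus std_normal_distribution lborel "{x..}"] by simp
  also have "\<dots> = 1 - measure std_normal_distribution {..<x}"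
    using std_normal.prob_compl[of "{..<x}"] by (simp add: Compl_eq_Diff_UNIV[symmetric])
  also have "measure std_normal_distribution {..<x} = std_normal_cdf x"
  proof -
    have "measure std_normal_distribution {x} = 0"
      by (simp add: measure_def emeasure_density)
    moreover have "{..x} = {..<x} \<union> {x}"
      by auto
    ultimately show ?thesis
      using std_normal.finite_measure_Union[of "{..<x}" "{x}"] by (simp add: cdf_def2)
  qed
  finally show ?thesis .
qed

lemma std_normal_cdf_0: "std_normal_cdf 0 = 1 / 2"
  using std_normal_cdf_uminus[of 0] by simp

lemma std_normal_cdf_pos: "0 < std_normal_cdf x"
proof -
  have "0 < std_normal_density (max \<bar>x - 1\<bar> \<bar>x\<bar>) * (x - (x - 1))"
    by (simp add: normal_density_pos)
  also have "\<dots> \<le> std_normal_cdf x - std_normal_cdf (x - 1)"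
    by (rule std_normal_cdf_diff_ge) simp
  finally show ?thesis
    using std_normal.cdf_nonneg[of "x - 1"] by linarith
qed

lemma (in prob_space) prob_normal_le:
  assumes "distributed M lborel X (normal_density \<mu> \<sigma>)" "0 < \<sigma>"
  shows "prob {\<omega> \<in> space M. X \<omega> \<le> t} = std_normal_cdf ((t - \<mu>) / \<sigma>)"
proof -
  have Z: "distributed M lborel (\<lambda>\<omega>. (X \<omega> - \<mu>) / \<sigma>) std_normal_density"
    using assms normal_standard_normal_convert by blast
  have "{\<omega> \<in> space M. X \<omega> \<le> t} = (\<lambda>\<omega>. (X \<omega> - \<mu>) / \<sigma>) -` {..(t - \<mu>) / \<sigma>} \<inter> space M"
    using assms(2) by (auto simp: divide_right_mono le_divide_eq)
  then show ?thesis
    using distributed_measurable[OF Z]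
    by (simp add: measure_distr[of _ M lborel, symmetric] distributed_distr_eq_density[OF Z] cdf_def2)
qed

section \<open>Error bounds for a single threshold\<close>

lemma one_minus_power_le_half:
  fixes q :: real
  assumes "0 \<le> q" "q \<le> 1" "1 \<le> real N * q"
  shows "(1 - q) ^ N \<le> 1 / 2"
proof -
  have "(1 - q) ^ N \<le> exp (- q) ^ N"
    using assms exp_ge_add_one_self[of "- q"] by (intro power_mono) auto
  also have "\<dots> = exp (- (real N * q))"
    by (simp add: exp_of_nat_mult[symmetric])
  also have "\<dots> \<le> exp (- 1)"
    using assms by simp
  also have "\<dots> \<le> 1 / 2"
    using exp_ge_add_one_self[of 1] by (simp add: exp_minus field_simps)
  finally show ?thesis .
qed

text \<open>\<open>\<surd>(2 ln N)\<close> is the level of the maximum of \<open>N\<close> independent standard normal variables: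
  slightly below it, \<open>N\<close> times the upper tail still tends to infinity.\<close>

lemma eventually_mult_std_normal_tail_ge_1:
  fixes c :: real
  assumes "0 < c"
  shows "\<forall>\<^sub>F N in sequentially. 1 \<le> real N * (1 - std_normal_cdf (sqrt (2 * ln (real N)) - c))"
proof -
  define L where "L N = sqrt (2 * ln (real N))" for N :: nat
  have density_eq: "real N * std_normal_density (L N - c / 2) = exp (c * L N / 2 - c\<^sup>2 / 8) / sqrt (2 * pi)"
    if "0 < N" for N
  proof -
    have "(L N)\<^sup>2 = 2 * ln (real N)"
      using that by (simp add: L_def)
    then have "- (L N - c / 2)\<^sup>2 / 2 = (c * L N / 2 - c\<^sup>2 / 8) - ln (real N)"
      by (simp add: power2_diff field_simps)
    with that show ?thesis
      by (simp add: std_normal_density_def exp_diff)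
  qed
  have "filterlim (\<lambda>N. exp (c * L N / 2 - c\<^sup>2 / 8) / sqrt (2 * pi) * (c / 2)) at_top sequentially"
    unfolding L_def using assms by real_asymp
  then have "\<forall>\<^sub>F N in sequentially. 1 \<le> exp (c * L N / 2 - c\<^sup>2 / 8) / sqrt (2 * pi) * (c / 2)"
    unfolding filterlim_at_top by blast
  moreover have "filterlim L at_top sequentially"
    unfolding L_def by real_asymp
  then have "\<forall>\<^sub>F N in sequentially. c \<le> L N"
    unfolding filterlim_at_top by blast
  ultimately show ?thesis
    using eventually_gt_at_top[of 0]
  proof eventually_elim
    case (elim N)
    then have "max \<bar>L N - c\<bar> \<bar>L N - c / 2\<bar> = L N - c / 2"
      using assms by simp
    then have "std_normal_density (L N - c / 2) * (c / 2)
        \<le> std_normal_cdf (L N - c / 2) - std_normal_cdf (L N - c)"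
      using std_normal_cdf_diff_ge[of "L N - c" "L N - c / 2"] assms by simp
    also have "\<dots> \<le> 1 - std_normal_cdf (L N - c)"
      using std_normal.cdf_bounded_prob by simp
    finally have tail: "std_normal_density (L N - c / 2) * (c / 2) \<le> 1 - std_normal_cdf (L N - c)" .
    have "1 \<le> real N * std_normal_density (L N - c / 2) * (c / 2)"
      using elim density_eq[of N] by simp
    also have "\<dots> \<le> real N * (1 - std_normal_cdf (L N - c))"
      using tail by (simp add: mult.assoc mult_left_mono)
    finally show ?case
      by (simp add: L_def)
  qed
qed

text \<open>For the standardised threshold \<open>x\<close> and signal strength \<open>a\<close>, the three quantities below
  are the probabilities of dropping one given signal, of keeping one of \<open>N\<close> nulls and of
  dropping one of \<open>s\<close> signals.\<close>

lemma eventually_max_error_bounds_ge: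
  fixes c :: real
  assumes "0 < c"
  shows "\<forall>\<^sub>F n in sequentially. \<forall>N s a x. n = N + s \<longrightarrow> 0 < a \<longrightarrow> a < sqrt (2 * ln (real N)) \<longrightarrow>
    1 / 2 - c \<le> max (std_normal_cdf (x - a))
                    (max (1 - std_normal_cdf x ^ N) (1 - (1 - std_normal_cdf (x - a)) ^ s))"
proof -
  obtain N0 where N0: "\<And>N. N0 \<le> N \<Longrightarrow>
      1 \<le> real N * (1 - std_normal_cdf (sqrt (2 * ln (real N)) - c))"
    using eventually_mult_std_normal_tail_ge_1[OF assms] unfolding eventually_sequentially by blast
  define A where "A = sqrt (2 * ln (real N0))"
  have "filterlim (\<lambda>s. std_normal_cdf (- A) * real s) at_top sequentially"
    by (rule filterlim_tendsto_pos_mult_at_top[OF tendsto_const std_normal_cdf_pos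
          filterlim_real_sequentially])
  then obtain S0 where S0: "\<And>s. S0 \<le> s \<Longrightarrow> 1 \<le> std_normal_cdf (- A) * real s"
    unfolding filterlim_at_top eventually_sequentially by blast
  show ?thesis
    unfolding eventually_sequentially
  proof (intro exI allI impI)
    fix n N s a x
    assume "N0 + S0 \<le> n" "n = N + s" "0 < a" and a_less: "a < sqrt (2 * ln (real N))"
    then have "0 < sqrt (2 * ln (real N))"
      by linarith
    then have "0 < ln (real N)"
      by simp
    then have "1 \<le> N"
      by (cases N) auto
    have cdf_le_1: "std_normal_cdf y \<le> 1" for y
      by (rule std_normal.cdf_bounded_prob)
    consider "x < 0" | "a - c \<le> x" | "0 \<le> x \<and> x < a - c \<and> N0 \<le> N" | "0 \<le> x \<and> N < N0"
      by linarith
    then show "1 / 2 - c \<le> max (std_normal_cdf (x - a))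
        (max (1 - std_normal_cdf x ^ N) (1 - (1 - std_normal_cdf (x - a)) ^ s))"
    proof cases
      case 1
      then have "std_normal_cdf x \<le> 1 / 2"
        using std_normal.cdf_nondecreasing[of x 0] by (simp add: std_normal_cdf_0)
      moreover have "std_normal_cdf x ^ N \<le> std_normal_cdf x ^ 1"
        using \<open>1 \<le> N\<close> by (intro power_decreasing) (simp_all add: std_normal.cdf_nonneg cdf_le_1)
      ultimately show ?thesis
        using assms by simp
    next
      case 2
      then have "std_normal_cdf (- c) \<le> std_normal_cdf (x - a)"
        by (intro std_normal.cdf_nondecreasing) simp
      moreover have "std_normal_cdf c - std_normal_cdf 0 \<le> c"
        using std_normal_cdf_diff_le[of 0 c] assms by simp
      ultimately show ?thesis
        by (simp add: std_normal_cdf_uminus std_normal_cdf_0)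
    next
      case 3
      define q where "q = 1 - std_normal_cdf (sqrt (2 * ln (real N)) - c)"
      have "std_normal_cdf x \<le> 1 - q"
        unfolding q_def using 3 a_less by (simp add: std_normal.cdf_nondecreasing)
      then have "std_normal_cdf x ^ N \<le> (1 - q) ^ N"
        by (simp add: power_mono std_normal.cdf_nonneg)
      also have "\<dots> \<le> 1 / 2"
        using N0[of N] 3 std_normal.cdf_nonneg cdf_le_1 unfolding q_def
        by (intro one_minus_power_le_half) auto
      finally show ?thesis
        using assms by simp
    next
      case 4
      have "sqrt (2 * ln (real N)) \<le> A"
        using 4 \<open>1 \<le> N\<close> unfolding A_def by simp
      then have "(1 - std_normal_cdf (x - a)) ^ s \<le> (1 - std_normal_cdf (- A)) ^ s"
        using 4 a_less cdf_le_1
        by (intro power_mono diff_left_mono std_normal.cdf_nondecreasing) simp_all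
      also have "\<dots> \<le> 1 / 2"
        using S0[of s] 4 \<open>N0 + S0 \<le> n\<close> \<open>n = N + s\<close> std_normal_cdf_pos[of "- A"] cdf_le_1
        by (intro one_minus_power_le_half) (auto simp: mult.commute)
      finally show ?thesis
        using assms by simp
    qed
  qed
qed

section \<open>The observation model\<close>

lemma indep_vars_PiM_components:
  assumes "\<And>k. k \<in> K \<Longrightarrow> prob_space (M k)" "K \<noteq> {}"
  shows "prob_space.indep_vars (PiM K M) M (\<lambda>k \<omega>. \<omega> k) K"
proof -
  interpret prob_space "PiM K M"
    using assms(1) by (rule prob_space_PiM)
  have "distr (PiM K M) (PiM K M) (\<lambda>\<omega>. \<lambda>k\<in>K. \<omega> k) = distr (PiM K M) (PiM K M) (\<lambda>\<omega>. \<omega>)"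
    by (rule distr_cong) (auto simp: space_PiM)
  also have "\<dots> = (\<Pi>\<^sub>M k\<in>K. distr (PiM K M) (M k) (\<lambda>\<omega>. \<omega> k))"
    using assms(1) by (auto simp: distr_PiM_component intro!: PiM_cong)
  finally show ?thesis
    using assms by (subst indep_vars_iff_distr_eq_PiM') auto
qed

lemma sum_singleton_times: "(\<Sum>k\<in>{i} \<times> J. f k) = (\<Sum>j\<in>J. f (i, j))"
proof -
  have "{i} \<times> J = Pair i ` J"
    by auto
  then show ?thesis
    by (simp add: sum.reindex inj_on_def)
qed

lemma prob_space_obs_model: "prob_space (obs_model m S \<theta> n)"
  unfolding obs_model_def by (intro prob_space_PiM prob_space_normal_density) simp

lemma indep_vars_obs_model_coordinates:
  assumes "1 \<le> m" "1 \<le> n"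
  shows "prob_space.indep_vars (obs_model m S \<theta> n) (\<lambda>_. borel) (\<lambda>k y. y k) ({1..n} \<times> {1..2*m})"
proof -
  have "prob_space.indep_vars (obs_model m S \<theta> n)
      (\<lambda>k. density lborel (normal_density (if fst k \<in> S then \<theta> else 0) 1)) (\<lambda>k y. y k)
      ({1..n} \<times> {1..2*m})"
    unfolding obs_model_def using assms
    by (intro indep_vars_PiM_components prob_space_normal_density) auto
  then show ?thesis
    unfolding prob_space.indep_vars_def2[OF prob_space_obs_model]
    by (simp cong: measurable_cong_sets)
qed

lemma distributed_obs_model_coordinate:
  assumes "k \<in> {1..n} \<times> {1..2*m}"
  shows "distributed (obs_model m S \<theta> n) lborel (\<lambda>y. y k)
    (normal_density (if fst k \<in> S then \<theta> else 0) 1)"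
proof -
  let ?M = "\<lambda>k. density lborel (normal_density (if fst k \<in> S then \<theta> else 0) 1)"
  have "distr (obs_model m S \<theta> n) (?M k) (\<lambda>y. y k) = ?M k"
    unfolding obs_model_def by (rule distr_PiM_component[OF _ assms]) (simp add: prob_space_normal_density)
  moreover have "(\<lambda>y. y k) \<in> measurable (obs_model m S \<theta> n) (?M k)"
    unfolding obs_model_def by (rule measurable_component_singleton[OF assms])
  ultimately show ?thesis
    unfolding distributed_def by (simp cong: distr_cong measurable_cong_sets)
qed

lemma distributed_avg_stat:
  assumes "1 \<le> m" "i \<in> {1..n}"
  shows "distributed (obs_model m S \<theta> n) lborel (\<lambda>y. avg_stat m y i)
    (normal_density (if i \<in> S then \<theta> else 0) (1 / sqrt (2 * m)))"
proof -
  interpret prob_space "obs_model m S \<theta> n"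
    by (rule prob_space_obs_model)
  define \<mu> where "\<mu> = (if i \<in> S then \<theta> else 0)"
  let ?B = "{i} \<times> {1..2*m}"
  have B: "?B \<subseteq> {1..n} \<times> {1..2*m}"
    using assms by auto
  have "indep_vars (\<lambda>_. borel) (\<lambda>k y. y k) ?B"
    using indep_vars_subset[OF indep_vars_obs_model_coordinates B] assms by auto
  moreover have "distributed (obs_model m S \<theta> n) lborel (\<lambda>y. y k) (normal_density \<mu> 1)"
    if "k \<in> ?B" for k
  proof -
    have "fst k = i"
      using that by auto
    with distributed_obs_model_coordinate[of k n m S \<theta>] B that show ?thesis
      by (auto simp: \<mu>_def)
  qed
  ultimately have "distributed (obs_model m S \<theta> n) lborel (\<lambda>y. \<Sum>k\<in>?B. y k)
      (normal_density (\<Sum>k\<in>?B. \<mu>) (sqrt (\<Sum>k\<in>?B. 1\<^sup>2)))"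
    using assms by (intro sum_indep_normal) auto
  then have "distributed (obs_model m S \<theta> n) lborel (\<lambda>y. \<Sum>k\<in>?B. y k)
      (normal_density (2 * m * \<mu>) (sqrt (2 * m)))"
    by (simp add: card_cartesian_product)
  then have "distributed (obs_model m S \<theta> n) lborel (\<lambda>y. 0 + 1 / (2 * m) * (\<Sum>k\<in>?B. y k))
      (normal_density (0 + 1 / (2 * m) * (2 * m * \<mu>)) (\<bar>1 / (2 * m)\<bar> * sqrt (2 * m)))"
    using assms by (intro normal_density_affine) auto
  moreover have "\<bar>1 / (2 * m)\<bar> * sqrt (2 * m) = 1 / sqrt (2 * m)"
    using assms by (simp add: field_simps real_sqrt_divide real_div_sqrt)
  ultimately show ?thesis
    using assms by (simp add: avg_stat_def sum_singleton_times \<mu>_def)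
qed

lemma indep_vars_avg_stat:
  assumes "1 \<le> m" "1 \<le> n"
  shows "prob_space.indep_vars (obs_model m S \<theta> n) (\<lambda>_. borel) (\<lambda>i y. avg_stat m y i) {1..n}"
proof -
  interpret prob_space "obs_model m S \<theta> n"
    by (rule prob_space_obs_model)
  define B where "B i = {i} \<times> {1..2*m}" for i :: nat
  have "indep_vars (\<lambda>i. PiM (B i) (\<lambda>_. borel)) (\<lambda>i y. restrict y (B i)) {1..n}"
    by (rule indep_vars_restrict[OF indep_vars_obs_model_coordinates[OF assms]])
      (auto simp: B_def disjoint_family_on_def)
  moreover have "(\<lambda>y. avg_stat m y i) \<in> borel_measurable (PiM (B i) (\<lambda>_. borel))" for i
    unfolding avg_stat_def B_def by measurable
  ultimately have "indep_vars (\<lambda>_. borel) (\<lambda>i y. avg_stat m (restrict y (B i)) i) {1..n}"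
    by (rule indep_vars_compose2)
  then show ?thesis
    by (rule indep_vars_cong[THEN iffD1, rotated 3]) (auto simp: avg_stat_def B_def)
qed

lemma sets_obs_model_error:
  assumes "1 \<le> m" "S \<subseteq> {1..n}"
  shows "{y \<in> space (obs_model m S \<theta> n). thresh_support m n \<tau> y \<noteq> S} \<in> sets (obs_model m S \<theta> n)"
proof -
  have "{y \<in> space (obs_model m S \<theta> n). thresh_support m n \<tau> y \<noteq> S} =
      (\<Union>i\<in>{1..n}. {y \<in> space (obs_model m S \<theta> n). (\<tau> < avg_stat m y i) \<noteq> (i \<in> S)})"
    using assms(2) by (auto simp: thresh_support_def)
  moreover have "{y \<in> space (obs_model m S \<theta> n). (\<tau> < avg_stat m y i) \<noteq> (i \<in> S)}
      \<in> sets (obs_model m S \<theta> n)" if "i \<in> {1..n}" for i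
  proof -
    have "(\<lambda>y. avg_stat m y i) \<in> borel_measurable (obs_model m S \<theta> n)"
      using distributed_measurable[OF distributed_avg_stat[OF assms(1) that]] by simp
    then show ?thesis
      by measurable
  qed
  ultimately show ?thesis
    by (simp add: sets.finite_UN)
qed

lemma err_prob_ge_one_minus_prod:
  assumes "1 \<le> m" "S \<subseteq> {1..n}" "J \<subseteq> {1..n}"
  shows "1 - (\<Prod>i\<in>J. measure (obs_model m S \<theta> n)
      {y \<in> space (obs_model m S \<theta> n). (\<tau> < avg_stat m y i) = (i \<in> S)}) \<le> err_prob m S \<theta> n \<tau>"
proof (cases "J = {}")
  case False
  let ?M = "obs_model m S \<theta> n"
  let ?E = "{y \<in> space ?M. thresh_support m n \<tau> y \<noteq> S}"
  let ?C = "\<lambda>i. (\<lambda>y. avg_stat m y i) -` {t. (\<tau> < t) = (i \<in> S)} \<inter> space ?M"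
  interpret prob_space ?M
    by (rule prob_space_obs_model)
  have "1 \<le> n"
    using False assms(3) by auto
  have classified_borel: "{t. (\<tau> < t) = (i \<in> S)} \<in> sets borel" for i
    by (cases "i \<in> S") auto
  have "?C i \<in> events" if "i \<in> J" for i
  proof -
    have "i \<in> {1..n}"
      using that assms(3) by auto
    from distributed_measurable[OF distributed_avg_stat[OF assms(1) this]] show ?thesis
      by (rule measurable_sets) (simp add: classified_borel)
  qed
  moreover have "space ?M - ?E \<subseteq> (\<Inter>i\<in>J. ?C i)"
  proof (intro subsetI INT_I)
    fix y i
    assume y: "y \<in> space ?M - ?E" and "i \<in> J"
    then have "i \<in> {1..n}"
      using assms(3) by auto
    moreover have "i \<in> thresh_support m n \<tau> y \<longleftrightarrow> i \<in> S"
      using y by simp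
    ultimately show "y \<in> ?C i"
      using y by (simp add: thresh_support_def)
  qed
  ultimately have "prob (space ?M - ?E) \<le> prob (\<Inter>i\<in>J. ?C i)"
    using False assms(3) finite_subset[OF assms(3)]
    by (intro finite_measure_mono sets.finite_INT) auto
  also have "\<dots> = (\<Prod>i\<in>J. prob (?C i))"
    using False assms(3) finite_subset[OF assms(3)]
    by (intro indep_varsD[OF indep_vars_avg_stat[OF assms(1) \<open>1 \<le> n\<close>]] classified_borel) auto
  finally have "prob (space ?M - ?E) \<le> (\<Prod>i\<in>J. prob (?C i))" .
  moreover have "?C i = {y \<in> space ?M. (\<tau> < avg_stat m y i) = (i \<in> S)}" for i
    by auto
  ultimately show ?thesis
    using prob_compl[OF sets_obs_model_error[OF assms(1,2)]] by (simp add: err_prob_def)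
qed (simp add: err_prob_def)

lemma prob_classified_correctly:
  assumes "1 \<le> m" "i \<in> {1..n}"
  shows "measure (obs_model m S \<theta> n) {y \<in> space (obs_model m S \<theta> n). (\<tau> < avg_stat m y i) = (i \<in> S)} =
    (if i \<in> S then 1 - std_normal_cdf (\<tau> * sqrt (2 * real m) - \<theta> * sqrt (2 * real m))
     else std_normal_cdf (\<tau> * sqrt (2 * real m)))"
proof -
  let ?M = "obs_model m S \<theta> n"
  interpret prob_space ?M
    by (rule prob_space_obs_model)
  have le: "prob {y \<in> space ?M. avg_stat m y i \<le> \<tau>} =
      std_normal_cdf ((\<tau> - (if i \<in> S then \<theta> else 0)) * sqrt (2 * real m))"
    using prob_normal_le[OF distributed_avg_stat[OF assms]] assms(1) by simp
  show ?thesis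
  proof (cases "i \<in> S")
    case True
    have "{y \<in> space ?M. (\<tau> < avg_stat m y i) = (i \<in> S)} = space ?M - {y \<in> space ?M. avg_stat m y i \<le> \<tau>}"
      using True by auto
    moreover have "{y \<in> space ?M. avg_stat m y i \<le> \<tau>} \<in> events"
      using distributed_measurable[OF distributed_avg_stat[OF assms]] by measurable
    ultimately show ?thesis
      using True le prob_compl by (simp add: left_diff_distrib)
  next
    case False
    then show ?thesis
      using le by (simp add: not_less)
  qed
qed

lemma err_prob_ge_error_bounds:
  fixes \<theta> \<tau> :: real
  assumes "1 \<le> m" "S \<subseteq> {1..n}" "S \<noteq> {}"
  defines "x \<equiv> \<tau> * sqrt (2 * real m)" and "a \<equiv> \<theta> * sqrt (2 * real m)"
  shows "max (std_normal_cdf (x - a))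
      (max (1 - std_normal_cdf x ^ (n - card S)) (1 - (1 - std_normal_cdf (x - a)) ^ card S))
    \<le> err_prob m S \<theta> n \<tau>"
proof -
  let ?P = "\<lambda>i. measure (obs_model m S \<theta> n)
    {y \<in> space (obs_model m S \<theta> n). (\<tau> < avg_stat m y i) = (i \<in> S)}"
  have signal: "?P i = 1 - std_normal_cdf (x - a)" if "i \<in> S" for i
  proof -
    have "i \<in> {1..n}"
      using assms(2) that by auto
    from prob_classified_correctly[OF assms(1) this, of S \<theta> \<tau>] that show ?thesis
      by (simp add: x_def a_def)
  qed
  have null: "?P i = std_normal_cdf x" if "i \<in> {1..n} - S" for i
  proof -
    have "i \<in> {1..n}"
      using that by auto
    from prob_classified_correctly[OF assms(1) this, of S \<theta> \<tau>] that show ?thesis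
      by (simp add: x_def)
  qed
  obtain i where "i \<in> S"
    using assms(3) by blast
  then have "1 - ?P i \<le> err_prob m S \<theta> n \<tau>"
    using err_prob_ge_one_minus_prod[OF assms(1,2), of "{i}"] assms(2) by auto
  moreover have "1 - (\<Prod>i\<in>{1..n} - S. ?P i) \<le> err_prob m S \<theta> n \<tau>"
    using err_prob_ge_one_minus_prod[OF assms(1,2)] by blast
  moreover have "(\<Prod>i\<in>{1..n} - S. ?P i) = (\<Prod>i\<in>{1..n} - S. std_normal_cdf x)"
    by (rule prod.cong[OF refl]) (rule null)
  moreover have "card ({1..n} - S) = n - card S"
    using assms(2) by (simp add: card_Diff_subset finite_subset)
  moreover have "1 - (\<Prod>i\<in>S. ?P i) \<le> err_prob m S \<theta> n \<tau>"
    using err_prob_ge_one_minus_prod[OF assms(1,2,2)] .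
  moreover have "(\<Prod>i\<in>S. ?P i) = (\<Prod>i\<in>S. 1 - std_normal_cdf (x - a))"
    by (rule prod.cong[OF refl]) (rule signal)
  ultimately show ?thesis
    using signal[OF \<open>i \<in> S\<close>] by (intro max.boundedI) simp_all
qed

lemma mult_sqrt_less_if_less_sqrt_divide:
  fixes \<theta> l :: real
  assumes "0 < m" "\<theta> < sqrt (l / m)"
  shows "\<theta> * sqrt (2 * m) < sqrt (2 * l)"
proof -
  have "\<theta> * sqrt (2 * m) < sqrt (l / m) * sqrt (2 * m)"
    using assms by (intro mult_strict_right_mono) auto
  also have "\<dots> = sqrt (l / m * (2 * m))"
    by (simp only: real_sqrt_mult)
  also have "\<dots> = sqrt (2 * l)"
    using assms(1) by simp
  finally show ?thesis .
qed

lemma eventually_err_prob_ge: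
  fixes c :: real
  assumes "0 < c" "1 \<le> m"
  shows "\<forall>\<^sub>F n in sequentially. \<forall>S \<theta> \<tau>. S \<subseteq> {1..n} \<longrightarrow> S \<noteq> {} \<longrightarrow> 0 < \<theta> \<longrightarrow>
    \<theta> < sqrt (ln (real (n - card S)) / real m) \<longrightarrow> 1 / 2 - c \<le> err_prob m S \<theta> n \<tau>"
  using eventually_max_error_bounds_ge[OF assms(1)]
proof eventually_elim
  case (elim n)
  show ?case
  proof (intro allI impI)
    fix S \<theta> \<tau>
    assume S: "S \<subseteq> {1..n}" "S \<noteq> {}" and "0 < \<theta>"
      and growth: "\<theta> < sqrt (ln (real (n - card S)) / real m)"
    let ?r = "sqrt (2 * real m)"
    have "card S \<le> n"
      using card_mono[OF finite_atLeastAtMost S(1)] by simp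
    moreover have "\<theta> * ?r < sqrt (2 * ln (real (n - card S)))"
      using growth assms(2) by (intro mult_sqrt_less_if_less_sqrt_divide) auto
    moreover have "0 < \<theta> * ?r"
      using \<open>0 < \<theta>\<close> assms(2) by simp
    ultimately have "1 / 2 - c \<le> max (std_normal_cdf (\<tau> * ?r - \<theta> * ?r))
        (max (1 - std_normal_cdf (\<tau> * ?r) ^ (n - card S))
          (1 - (1 - std_normal_cdf (\<tau> * ?r - \<theta> * ?r)) ^ card S))"
      by (intro elim[rule_format]) simp_all
    also have "\<dots> \<le> err_prob m S \<theta> n \<tau>"
      by (rule err_prob_ge_error_bounds[OF assms(2) S])
    finally show "1 / 2 - c \<le> err_prob m S \<theta> n \<tau>" .
  qed
qed

lemma ereal_le_Liminf_of_eventually_ge: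
  assumes "\<And>c. 0 < c \<Longrightarrow> \<forall>\<^sub>F n in F. L - c \<le> f n"
  shows "ereal L \<le> Liminf F (\<lambda>n. ereal (f n))"
proof (rule ereal_le_epsilon2)
  fix c :: real
  assume "0 < c"
  then have "ereal (L - c) \<le> Liminf F (\<lambda>n. ereal (f n))"
    using assms by (intro Liminf_bounded) (auto elim: eventually_mono)
  then have "ereal (L - c) + ereal c \<le> Liminf F (\<lambda>n. ereal (f n)) + ereal c"
    by (rule add_right_mono)
  then show "ereal L \<le> Liminf F (\<lambda>n. ereal (f n)) + ereal c"
    by simp
qed

theorem corollary1:
  fixes m :: nat and S :: "nat \<Rightarrow> nat set" and \<theta> :: "nat \<Rightarrow> real"
  assumes m_pos: "m \<ge> 1"
    and supp: "\<And>n. n \<ge> 1 \<Longrightarrow> S n \<subseteq> {1..n}"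
    and nonempty: "\<And>n. n \<ge> 1 \<Longrightarrow> S n \<noteq> {}"
    and theta_pos: "\<And>n. n \<ge> 1 \<Longrightarrow> \<theta> n > 0"
    and growth: "eventually (\<lambda>n. \<theta> n < sqrt (ln (real (n - card (S n))) / real m)) sequentially"
  shows "(1/2 :: ereal) \<le> liminf (\<lambda>n. ereal (INF \<tau>. err_prob m (S n) (\<theta> n) n \<tau>))"
proof -
  have "\<forall>\<^sub>F n in sequentially. 1 / 2 - c \<le> (INF \<tau>. err_prob m (S n) (\<theta> n) n \<tau>)" if "0 < c" for c
    using eventually_err_prob_ge[OF that m_pos] growth eventually_ge_at_top[of 1]
  proof eventually_elim
    case (elim n)
    then show ?case
      using supp nonempty theta_pos by (intro cINF_greatest) auto
  qed
  then have "ereal (1 / 2) \<le> liminf (\<lambda>n. ereal (INF \<tau>. err_prob m (S n) (\<theta> n) n \<tau>))"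
    by (rule ereal_le_Liminf_of_eventually_ge)
  then show ?thesis
    by (simp add: one_ereal_def numeral_eq_ereal)
qed

end
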